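(* Let $\alpha:I\to\mathbb{E}^3$ be a smooth space curve parametrized by arclength $s$ with curvature $\kappa\equiv1$. Then $\alpha$ is a Salkowski curve if and only if $\det(\alpha^{(3)}(s),\alpha^{(4)}(s),\alpha^{(5)}(s))=0$ for all $s\in I$.
   Context: $\alpha^{(k)}$ denotes the $k$-th derivative with respect to arclength, and $\det(u,v,w)$ is the determinant of the matrix with columns $u,v,w$. $\{T,N,B\}$ is the Frenet frame of $\alpha$. A Salkowski curve is a curve of constant curvature whose principal normal vector $N$ makes a constant angle with a fixed direction, i.e. $\langle N(s),d\rangle$ is constant for some fixed unit vector $d$ (equivalently, for $\kappa\equiv1$, $\alpha$ is a slant helix). *)

theory Defs
  imports "HOL-Analysis.Analysis"
begin

fun hderiv :: "(real \<Rightarrow> real^3) \<Rightarrow> nat \<Rightarrow> real \<Rightarrow> real^3" where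
  "hderiv \<alpha> 0 = \<alpha>"
| "hderiv \<alpha> (Suc k) = (\<lambda>t. vector_derivative (hderiv \<alpha> k) (at t))"

definition smooth_curve :: "(real \<Rightarrow> real^3) \<Rightarrow> real set \<Rightarrow> bool" where
  "smooth_curve \<alpha> I \<longleftrightarrow>
     (\<forall>k. \<forall>t\<in>I. (hderiv \<alpha> k has_vector_derivative hderiv \<alpha> (Suc k) t) (at t))"

definition arclength_param :: "(real \<Rightarrow> real^3) \<Rightarrow> real set \<Rightarrow> bool" where
  "arclength_param \<alpha> I \<longleftrightarrow> (\<forall>s\<in>I. norm (hderiv \<alpha> 1 s) = 1)"

text \<open>Curvature of an arclength-parametrized curve: kappa = |T'| = |alpha''|.\<close>
definition curvature :: "(real \<Rightarrow> real^3) \<Rightarrow> real \<Rightarrow> real" where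
  "curvature \<alpha> s = norm (hderiv \<alpha> 2 s)"

definition principal_normal :: "(real \<Rightarrow> real^3) \<Rightarrow> real \<Rightarrow> real^3" where
  "principal_normal \<alpha> s = (1 / curvature \<alpha> s) *\<^sub>R hderiv \<alpha> 2 s"

definition det3 :: "real^3 \<Rightarrow> real^3 \<Rightarrow> real^3 \<Rightarrow> real" where
  "det3 u v w = det (transpose (vector [u, v, w] :: real^3^3))"

definition salkowski :: "(real \<Rightarrow> real^3) \<Rightarrow> real set \<Rightarrow> bool" where
  "salkowski \<alpha> I \<longleftrightarrow>
     (\<exists>k. \<forall>s\<in>I. curvature \<alpha> s = k) \<and>
     (\<exists>d c. norm d = 1 \<and> (\<forall>s\<in>I. principal_normal \<alpha> s \<bullet> d = c))"

end

theory Submission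
  imports Defs
begin

(* Write a_k for the k-th derivative of a unit-speed curve a of curvature 1, so that the
   principal normal is N = a_2; being Salkowski then means that a_2 . d is constant
   for some unit vector d.

   Necessity: if a_2 . d is constant, repeated differentiation shows that a_3, a_4
   and a_5 are all orthogonal to d, hence coplanar, so their determinant vanishes.

   Sufficiency: the Frenet identities a_1 . a_3 = -1 and a_2 . a_4 = -|a_3|^2 show that
   w = a_3 x a_4 never vanishes.  Its derivative is w' = a_3 x a_5, and the vanishing
   determinant gives w' x w = 0, i.e. w' is parallel to w.  A nowhere vanishing vector
   function whose derivative is parallel to itself has constant direction u = w/|w|,
   and since a_3 is orthogonal to w, the inner product a_2 . u is constant. *)

unbundle cross3_syntax

text \<open>Higher derivatives are handled through the smoothness hypothesis; unfolding their recursive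
  definition would only expose nested vector derivatives.\<close>
declare hderiv.simps [simp del]

lemma has_real_derivative_inner:
  fixes f g :: "real \<Rightarrow> 'a::real_inner"
  assumes "(f has_vector_derivative f') (at t)" "(g has_vector_derivative g') (at t)"
  shows "((\<lambda>x. f x \<bullet> g x) has_real_derivative (f t \<bullet> g' + f' \<bullet> g t)) (at t)"
  using bounded_bilinear.has_vector_derivative[OF bounded_bilinear_inner assms]
  by (simp add: has_real_derivative_iff_has_vector_derivative)

lemma has_vector_derivative_cross:
  fixes f g :: "real \<Rightarrow> real^3"
  assumes "(f has_vector_derivative f') (at t)" "(g has_vector_derivative g') (at t)"
  shows "((\<lambda>x. f x \<times> g x) has_vector_derivative (f t \<times> g' + f' \<times> g t)) (at t)"
  using bounded_bilinear.has_vector_derivative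
      [OF bilinear_conv_bounded_bilinear[THEN iffD1, OF bilinear_cross] assms]
  by simp

lemma derivative_of_constant_inner:
  fixes f g :: "real \<Rightarrow> 'a::real_inner"
  assumes "open I" "t \<in> I" "\<forall>s\<in>I. f s \<bullet> g s = c"
    and "(f has_vector_derivative f') (at t)" "(g has_vector_derivative g') (at t)"
  shows "f t \<bullet> g' + f' \<bullet> g t = 0"
proof -
  have "((\<lambda>s. f s \<bullet> g s) has_real_derivative 0) (at t)"
    by (rule has_field_derivative_transform_within_open[of "\<lambda>_. c", OF _ assms(1,2)])
      (use assms(3) in auto)
  then show ?thesis
    using has_real_derivative_inner[OF assms(4,5)] DERIV_unique by blast
qed

lemma orthogonal_derivative_of_constant_inner:
  fixes f :: "real \<Rightarrow> 'a::real_inner"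
  assumes "open I" "\<forall>s\<in>I. f s \<bullet> d = c"
    and "\<And>t. t \<in> I \<Longrightarrow> (f has_vector_derivative f' t) (at t)"
  shows "\<forall>t\<in>I. f' t \<bullet> d = 0"
  using derivative_of_constant_inner[OF assms(1) _ assms(2) assms(3) has_vector_derivative_const]
  by simp

lemma constant_inner_of_orthogonal_derivative:
  fixes f :: "real \<Rightarrow> 'a::real_inner"
  assumes "convex I" "\<forall>t\<in>I. f' t \<bullet> d = 0"
    and "\<And>t. t \<in> I \<Longrightarrow> (f has_vector_derivative f' t) (at t)"
  shows "\<exists>c. \<forall>s\<in>I. f s \<bullet> d = c"
proof (rule has_field_derivative_zero_constant[OF assms(1)])
  fix t assume "t \<in> I"
  with has_real_derivative_inner[OF assms(3) has_vector_derivative_const, of t d] assms(2)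
  show "((\<lambda>s. f s \<bullet> d) has_real_derivative 0) (at t within I)"
    by (simp add: has_field_derivative_at_within)
qed

lemma sgn_has_vector_derivative_zero:
  fixes f :: "real \<Rightarrow> 'a::real_inner"
  assumes f': "(f has_vector_derivative c *\<^sub>R f t) (at t)" and nz: "f t \<noteq> 0"
  shows "((\<lambda>s. sgn (f s)) has_vector_derivative 0) (at t)"
proof -
  have sq: "((\<lambda>s. f s \<bullet> f s) has_real_derivative 2 * c * (f t \<bullet> f t)) (at t)"
    using has_real_derivative_inner[OF f' f'] by (simp add: algebra_simps)
  have pos: "f t \<bullet> f t > 0" using nz by simp
  have "inverse (sqrt (f t \<bullet> f t)) / 2 * (2 * c * (f t \<bullet> f t)) = c * sqrt (f t \<bullet> f t)"
    using pos by (simp add: field_simps real_div_sqrt)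
  with DERIV_chain2[OF DERIV_real_sqrt[OF pos] sq]
  have "((\<lambda>s. norm (f s)) has_real_derivative c * norm (f t)) (at t)"
    unfolding norm_eq_sqrt_inner by (rule DERIV_cong)
  then have "((\<lambda>s. inverse (norm (f s))) has_real_derivative - c * inverse (norm (f t))) (at t)"
    using DERIV_inverse'[of "\<lambda>s. norm (f s)"] nz by (fastforce simp: power2_eq_square field_simps)
  from has_vector_derivative_scaleR[OF this f']
  show ?thesis by (simp add: sgn_div_norm divide_inverse_commute mult.commute)
qed

lemma constant_direction:
  fixes f :: "real \<Rightarrow> 'a::real_inner"
  assumes "convex I"
    and "\<And>t. t \<in> I \<Longrightarrow> (f has_vector_derivative c t *\<^sub>R f t) (at t)"
    and "\<And>t. t \<in> I \<Longrightarrow> f t \<noteq> 0"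
  obtains u where "\<And>t. t \<in> I \<Longrightarrow> sgn (f t) = u"
  using has_vector_derivative_zero_constant[OF assms(1)]
    sgn_has_vector_derivative_zero[OF assms(2,3)] has_vector_derivative_at_within by blast

lemma det3_triple_product: "det3 u v w = u \<bullet> (v \<times> w)"
  by (simp add: det3_def det_transpose dot_cross_det)

lemma det3_orthogonal:
  fixes u v w d :: "real^3"
  assumes "u \<bullet> d = 0" "v \<bullet> d = 0" "w \<bullet> d = 0" "d \<noteq> 0"
  shows "det3 u v w = 0"
proof -
  let ?M = "vector [u, v, w] :: real^3^3"
  have "?M *v d = 0"
    using assms by (simp add: vec_eq_iff forall_3 matrix_vector_mult_def vector_3 inner_vec_def
        sum_3 algebra_simps)
  then have "\<not> inj ((*v) ?M)"
    using assms(4) by (metis matrix_vector_mult_0_right injD)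
  then have "det ?M = 0"
    using invertible_det_nz inj_matrix_vector_mult by blast
  then show ?thesis by (simp add: det3_def det_transpose)
qed

lemma cross_inner_cross:
  fixes a b c e :: "real^3"
  shows "(a \<times> b) \<bullet> (c \<times> e) = (a \<bullet> c) * (b \<bullet> e) - (a \<bullet> e) * (b \<bullet> c)"
  by (simp add: cross3_simps)

lemma cross_zero_parallel:
  fixes a b :: "real^3"
  assumes "a \<times> b = 0" "b \<noteq> 0"
  shows "a = ((a \<bullet> b) / (b \<bullet> b)) *\<^sub>R b"
proof -
  have "(a \<times> b) \<times> b = (a \<bullet> b) *\<^sub>R b - (b \<bullet> b) *\<^sub>R a"
    by (simp add: cross3_simps forall_3)
  then have "(b \<bullet> b) *\<^sub>R a = (a \<bullet> b) *\<^sub>R b" using assms(1) by simp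
  then have "a = inverse (b \<bullet> b) *\<^sub>R ((a \<bullet> b) *\<^sub>R b)"
    using assms(2) by (metis inner_eq_zero_iff scaleR_scaleR left_inverse scaleR_one)
  then show ?thesis by (simp add: divide_inverse_commute)
qed

text \<open>For coplanar \<open>a, b, c\<close> the vectors \<open>a \<times> c\<close> and \<open>a \<times> b\<close> are parallel; applied to the
  third, fourth and fifth derivatives it shows that \<open>a''' \<times> a''''\<close> moves parallel to itself.\<close>
lemma cross_cross_of_coplanar:
  fixes a b c :: "real^3"
  assumes "det3 a b c = 0"
  shows "(a \<times> c) \<times> (a \<times> b) = 0"
proof -
  have "a \<bullet> (c \<times> b) = 0"
    using assms cross_skew[of c b] by (simp add: det3_triple_product)
  moreover have "(a \<times> c) \<times> (a \<times> b) = (a \<bullet> (c \<times> b)) *\<^sub>R a - (a \<bullet> (c \<times> a)) *\<^sub>R b"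
    unfolding cross_cross_det dot_cross_det ..
  ultimately show ?thesis by (simp add: dot_cross_self)
qed

text \<open>A smooth unit-speed curve of curvature 1 on an open parameter set; its principal normal is
  the second derivative.\<close>
locale unit_curvature_curve =
  fixes \<alpha> :: "real \<Rightarrow> real^3" and I :: "real set"
  assumes open_domain: "open I"
    and smooth: "smooth_curve \<alpha> I"
    and unit_speed: "arclength_param \<alpha> I"
    and unit_curvature: "\<forall>s\<in>I. curvature \<alpha> s = 1"
begin

lemma hderiv_has_derivative:
  "t \<in> I \<Longrightarrow> (hderiv \<alpha> k has_vector_derivative hderiv \<alpha> (Suc k) t) (at t)"
  using smooth unfolding smooth_curve_def by blast

lemma hderiv_derivatives:
  assumes "t \<in> I"
  shows "(hderiv \<alpha> 1 has_vector_derivative hderiv \<alpha> 2 t) (at t)"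
    and "(hderiv \<alpha> 2 has_vector_derivative hderiv \<alpha> 3 t) (at t)"
    and "(hderiv \<alpha> 3 has_vector_derivative hderiv \<alpha> 4 t) (at t)"
    and "(hderiv \<alpha> 4 has_vector_derivative hderiv \<alpha> 5 t) (at t)"
  using hderiv_has_derivative[OF assms, of 1] hderiv_has_derivative[OF assms, of 2]
    hderiv_has_derivative[OF assms, of 3] hderiv_has_derivative[OF assms, of 4]
  by (simp_all add: numeral_eq_Suc)

text \<open>Identities obtained by differentiating \<open>norm (hderiv \<alpha> 1) = 1\<close> and \<open>norm (hderiv \<alpha> 2) = 1\<close>.\<close>
lemma frenet_identities:
  assumes s: "s \<in> I"
  shows "hderiv \<alpha> 2 s \<bullet> hderiv \<alpha> 3 s = 0"
    and "hderiv \<alpha> 1 s \<bullet> hderiv \<alpha> 3 s = -1"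
    and "hderiv \<alpha> 2 s \<bullet> hderiv \<alpha> 4 s = - (hderiv \<alpha> 3 s \<bullet> hderiv \<alpha> 3 s)"
proof -
  note D = hderiv_derivatives
  have unit1: "\<forall>s\<in>I. hderiv \<alpha> 1 s \<bullet> hderiv \<alpha> 1 s = 1"
    using unit_speed by (simp add: arclength_param_def flip: power2_norm_eq_inner)
  have unit2: "\<forall>s\<in>I. hderiv \<alpha> 2 s \<bullet> hderiv \<alpha> 2 s = 1"
    using unit_curvature by (simp add: curvature_def flip: power2_norm_eq_inner)
  have orth12: "\<forall>s\<in>I. hderiv \<alpha> 1 s \<bullet> hderiv \<alpha> 2 s = 0"
  proof
    fix t assume t: "t \<in> I"
    from derivative_of_constant_inner[OF open_domain t unit1 D(1)[OF t] D(1)[OF t]]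
    show "hderiv \<alpha> 1 t \<bullet> hderiv \<alpha> 2 t = 0" by (simp add: inner_commute)
  qed
  have orth23: "\<forall>s\<in>I. hderiv \<alpha> 2 s \<bullet> hderiv \<alpha> 3 s = 0"
  proof
    fix t assume t: "t \<in> I"
    from derivative_of_constant_inner[OF open_domain t unit2 D(2)[OF t] D(2)[OF t]]
    show "hderiv \<alpha> 2 t \<bullet> hderiv \<alpha> 3 t = 0" by (simp add: inner_commute)
  qed
  show "hderiv \<alpha> 2 s \<bullet> hderiv \<alpha> 3 s = 0"
    using orth23 s by blast
  show "hderiv \<alpha> 1 s \<bullet> hderiv \<alpha> 3 s = -1"
    using derivative_of_constant_inner[OF open_domain s orth12 D(1)[OF s] D(2)[OF s]] unit2 s
    by (simp add: inner_commute add_eq_0_iff)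
  show "hderiv \<alpha> 2 s \<bullet> hderiv \<alpha> 4 s = - (hderiv \<alpha> 3 s \<bullet> hderiv \<alpha> 3 s)"
    using derivative_of_constant_inner[OF open_domain s orth23 D(2)[OF s] D(3)[OF s]]
    by (simp add: inner_commute add_eq_0_iff)
qed

text \<open>The cross product of the third and fourth derivatives never vanishes: by Lagrange's identity
  its inner product with the cross product of the second and third derivatives is the fourth
  power of the norm of the third derivative, which is nonzero as its inner product with the
  tangent is -1.\<close>
lemma third_cross_fourth_nonzero:
  assumes s: "s \<in> I"
  shows "hderiv \<alpha> 3 s \<times> hderiv \<alpha> 4 s \<noteq> 0"
proof
  assume zero: "hderiv \<alpha> 3 s \<times> hderiv \<alpha> 4 s = 0"
  have "hderiv \<alpha> 3 s \<noteq> 0"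
    using frenet_identities(2)[OF s] by force
  then have pos: "hderiv \<alpha> 3 s \<bullet> hderiv \<alpha> 3 s > 0" by simp
  have "(hderiv \<alpha> 3 s \<times> hderiv \<alpha> 4 s) \<bullet> (hderiv \<alpha> 2 s \<times> hderiv \<alpha> 3 s)
      = (hderiv \<alpha> 3 s \<bullet> hderiv \<alpha> 3 s)\<^sup>2"
    using frenet_identities(1,3)[OF s]
    by (simp add: cross_inner_cross inner_commute power2_eq_square)
  with zero pos show False by simp
qed

text \<open>Since the curvature is 1, the Salkowski condition concerns the second derivative alone.\<close>
lemma salkowski_iff_normal_direction:
  "salkowski \<alpha> I \<longleftrightarrow> (\<exists>d c. norm d = 1 \<and> (\<forall>s\<in>I. hderiv \<alpha> 2 s \<bullet> d = c))"
  using unit_curvature by (auto simp: salkowski_def principal_normal_def)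

text \<open>Necessity: the derivatives of orders 3, 4, 5 are all orthogonal to the fixed direction.\<close>
lemma salkowski_imp_coplanar:
  assumes "salkowski \<alpha> I" and s: "s \<in> I"
  shows "det3 (hderiv \<alpha> 3 s) (hderiv \<alpha> 4 s) (hderiv \<alpha> 5 s) = 0"
proof -
  obtain d c where "norm d = 1" and normal: "\<forall>s\<in>I. hderiv \<alpha> 2 s \<bullet> d = c"
    using assms(1) salkowski_iff_normal_direction by blast
  have orth3: "\<forall>t\<in>I. hderiv \<alpha> 3 t \<bullet> d = 0"
    using orthogonal_derivative_of_constant_inner[OF open_domain normal hderiv_derivatives(2)] .
  have orth4: "\<forall>t\<in>I. hderiv \<alpha> 4 t \<bullet> d = 0"
    using orthogonal_derivative_of_constant_inner[OF open_domain orth3 hderiv_derivatives(3)] .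
  have orth5: "\<forall>t\<in>I. hderiv \<alpha> 5 t \<bullet> d = 0"
    using orthogonal_derivative_of_constant_inner[OF open_domain orth4 hderiv_derivatives(4)] .
  from \<open>norm d = 1\<close> have "d \<noteq> 0" by auto
  with orth3 orth4 orth5 s show ?thesis
    by (blast intro: det3_orthogonal)
qed

text \<open>Sufficiency: the direction of the cross product of the third and fourth derivatives is the
  required fixed direction.\<close>
lemma coplanar_imp_salkowski:
  assumes "convex I" "I \<noteq> {}"
    and coplanar: "\<forall>s\<in>I. det3 (hderiv \<alpha> 3 s) (hderiv \<alpha> 4 s) (hderiv \<alpha> 5 s) = 0"
  shows "salkowski \<alpha> I"
proof -
  define w where "w t = hderiv \<alpha> 3 t \<times> hderiv \<alpha> 4 t" for t
  have w_nonzero: "w t \<noteq> 0" if "t \<in> I" for t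
    using third_cross_fourth_nonzero[OF that] by (simp add: w_def)
  have w_deriv: "(w has_vector_derivative
      ((hderiv \<alpha> 3 t \<times> hderiv \<alpha> 5 t) \<bullet> w t / (w t \<bullet> w t)) *\<^sub>R w t) (at t)"
    if t: "t \<in> I" for t
  proof -
    have "(w has_vector_derivative hderiv \<alpha> 3 t \<times> hderiv \<alpha> 5 t) (at t)"
      using has_vector_derivative_cross[OF hderiv_derivatives(3,4)[OF t]]
      by (simp add: w_def[abs_def])
    moreover have "(hderiv \<alpha> 3 t \<times> hderiv \<alpha> 5 t) \<times> w t = 0"
      using cross_cross_of_coplanar coplanar t by (simp add: w_def)
    ultimately show ?thesis
      using cross_zero_parallel w_nonzero[OF t] by metis
  qed
  obtain u where u: "\<And>t. t \<in> I \<Longrightarrow> sgn (w t) = u"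
    using constant_direction[OF assms(1) w_deriv w_nonzero] by blast
  obtain t0 where "t0 \<in> I" using assms(2) by blast
  then have "norm u = 1"
    using u w_nonzero by (metis norm_sgn)
  moreover have "\<forall>t\<in>I. hderiv \<alpha> 3 t \<bullet> u = 0"
    by (simp add: u[symmetric] sgn_div_norm w_def dot_cross_self)
  then have "\<exists>c. \<forall>s\<in>I. hderiv \<alpha> 2 s \<bullet> u = c"
    using constant_inner_of_orthogonal_derivative[OF assms(1) _ hderiv_derivatives(2)] by blast
  ultimately show ?thesis
    using salkowski_iff_normal_direction by blast
qed

end

theorem theorem4:
  fixes \<alpha> :: "real \<Rightarrow> real^3" and I :: "real set"
  assumes "is_interval I" and "open I" and "I \<noteq> {}"
    and "smooth_curve \<alpha> I"
    and "arclength_param \<alpha> I"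
    and "\<forall>s\<in>I. curvature \<alpha> s = 1"
  shows "salkowski \<alpha> I \<longleftrightarrow>
         (\<forall>s\<in>I. det3 (hderiv \<alpha> 3 s) (hderiv \<alpha> 4 s) (hderiv \<alpha> 5 s) = 0)"
proof -
  interpret unit_curvature_curve \<alpha> I
    using assms(2,4-6) by unfold_locales
  have "convex I"
    using assms(1) by (simp add: is_interval_convex)
  then show ?thesis
    using salkowski_imp_coplanar coplanar_imp_salkowski assms(3) by blast
qed

end
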